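(* Let $b,N,K,\Delta,R,L_0,L$ be positive integers with $2\le\Delta\le R-K<b-K-2$ and $\log_2N<K\le L_0\le L<b-\log_2(b+10)$. All configurations below are configurations over a fixed set of $N$ levels as in the context (with $z<2^b$). Then: (1) If a configuration consists of exactly one significand, in level $\lambda$, then $G=L_0+1-b-\lambda$ satisfies $2^K\le A(G)<2^b$. (2) Let $C$ be a configuration and $C'$ the configuration obtained by adding one significand to level $\ell$; write $SS'_\ell$, $A'_\ell(\cdot)$, $A'(\cdot)$ for the quantities of $C'$ and $A(\cdot)$ for those of $C$. Let $G$ be an integer with $A(G)<2^b$. (a) If $A'_\ell(G)\ge 2^b$, then $G_\downarrow=R-\lfloor\log_2 SS'_\ell\rfloor-\ell$ satisfies $2^K\le A'(G_\downarrow)<2^b$. (b) If $A'_\ell(G)<2^b$ but $A'(G)\ge 2^b$, then $G_\downarrow=G-\Delta$ satisfies $2^K\le A'(G_\downarrow)<2^b$. (3) If $C'$ is obtained from $C$ by removing significands, then $A'(G)\le A(G)$ for every integer $G$; in particular $A(G)<2^b$ implies $A'(G)<2^b$. (4) For any nonempty configuration with largest nonempty level $\lambda$, let $H_r=\lfloor SS_{\lambda-r}/2^b\rfloor$ for $r=0,\dots,b$, $E=\sum_{r=0}^b\lfloor H_r2^{-r+1}\rfloor$, $t=\lfloor\log_2\max\{E,1\}\rfloor$, and $G_\uparrow=L+1-b-t-\lambda$. Then $2^L\le A(G_\uparrow)<2^b$.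
   Context: Fix an integer $b\ge 2$. There is a set $\mathcal L$ of $N$ levels, which are consecutive integers. Each level $\ell$ holds a finite (possibly empty) multiset of normalized significands, each an integer in $[2^{b-1},2^b)$. Let $z$ be the total number of stored significands over all levels; assume $z<2^b$. For each level, $SS_\ell$ is the sum of its significands (so $SS_\ell=0$ iff the level is empty); set $SS_\ell=0$ for integers $\ell\notin\mathcal L$. The level weight is $W_\ell=SS_\ell2^\ell$. For an integer global shift $G$, $A_\ell(G)=\lfloor W_\ell2^G\rfloor+1$ if $SS_\ell>0$ and $A_\ell(G)=0$ if $SS_\ell=0$; $A(G)=\sum_\ell A_\ell(G)$ and $M(G)=\sum_\ell W_\ell2^G$. The configuration is nonempty if $z\ge1$. (In the paper's terminology a shift $G$ is safe if $A(G)<2^b$, good if $A(G)\ge2^K$, strongly good if $A(G)\ge 2^L$.) *)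

theory Defs
  imports Complex_Main "HOL-Library.Multiset"
begin

type_synonym config = "int \<Rightarrow> nat multiset"

definition levels :: "int \<Rightarrow> nat \<Rightarrow> int set" where
  "levels lo N = {lo..<lo + int N}"

definition zcount :: "int \<Rightarrow> nat \<Rightarrow> config \<Rightarrow> nat" where
  "zcount lo N C = (\<Sum>l\<in>levels lo N. size (C l))"

definition valid_config :: "nat \<Rightarrow> int \<Rightarrow> nat \<Rightarrow> config \<Rightarrow> bool" where
  "valid_config b lo N C \<longleftrightarrow>
     (\<forall>l. l \<notin> levels lo N \<longrightarrow> C l = {#}) \<and>
     (\<forall>l. \<forall>x \<in># C l. 2^(b-1) \<le> x \<and> x < 2^b) \<and>
     zcount lo N C < 2^b"

definition SS :: "config \<Rightarrow> int \<Rightarrow> nat" where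
  "SS C l = sum_mset (C l)"

definition W :: "config \<Rightarrow> int \<Rightarrow> real" where
  "W C l = real (SS C l) * 2 powr (real_of_int l)"

definition A_lev :: "config \<Rightarrow> int \<Rightarrow> int \<Rightarrow> int" where
  "A_lev C G l = (if SS C l > 0 then \<lfloor>W C l * 2 powr (real_of_int G)\<rfloor> + 1 else 0)"

definition A :: "int \<Rightarrow> nat \<Rightarrow> config \<Rightarrow> int \<Rightarrow> int" where
  "A lo N C G = (\<Sum>l\<in>levels lo N. A_lev C G l)"

definition M :: "int \<Rightarrow> nat \<Rightarrow> config \<Rightarrow> int \<Rightarrow> real" where
  "M lo N C G = (\<Sum>l\<in>levels lo N. W C l * 2 powr (real_of_int G))"

end

theory Submission
  imports Defs
begin

(* Each nonempty level contributes its floor plus one to A(G), so A(G) lies within N of the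
   real mass M(G) = (SUM l. SS_l * 2^(l+G)); since N < 2^K, a shift is good and safe as soon as
   2^K <= M(G) and M(G) + N < 2^b.  Every claim thus reduces to locating M at the chosen shift,
   using M(G + d) = 2^d * M(G).  For a single significand, and after a level overflow, one level
   dominates and the shift pins its normalised mass between 2^R and 2^(R+1) (resp. 2^L0 and
   2^(L0+1)); the overflow also forces the new shift at least 2 below G, so the other levels
   shrink by a factor 4.  After a total overflow M(G) lies in [2^(b-1), 2^(b+1)), and shifting by
   Delta divides it by 2^Delta.  For the upward shift, z < 2^b bounds the total significand sum by
   4^b, so levels more than b below the top level lam add less than 2^(b-1) to M(-lam); the
   truncated quotients H_r give 2^(b-1) E <= M(-lam) < 2^(b-1) (E + b + 6), and t = floor(log2 E)
   places M at the upward shift in [2^L, 2^L (b + 8)). *)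

lemma W_mult_powr: "W C l * 2 powr G = real (SS C l) * 2 powr (l + G)"
  by (simp add: W_def powr_add mult.assoc)

lemma M_nonneg: "0 \<le> M lo N C G"
  by (simp add: M_def W_def sum_nonneg)

lemma M_shift: "M lo N C (G + d) = 2 powr d * M lo N C G"
  by (simp add: M_def W_def sum_distrib_left powr_add algebra_simps)

lemma level_mass_le_M:
  "l \<in> levels lo N \<Longrightarrow> W C l * 2 powr G \<le> M lo N C G"
  unfolding M_def by (rule member_le_sum) (auto simp: W_def levels_def)

lemma A_lev_bounds:
  "W C l * 2 powr G \<le> A_lev C G l" "A_lev C G l \<le> W C l * 2 powr G + 1"
  by (auto simp: A_lev_def W_def)

lemma M_le_A: "M lo N C G \<le> A lo N C G"
  unfolding M_def A_def of_int_sum by (rule sum_mono) (rule A_lev_bounds)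

lemma A_le_M_add_N: "A lo N C G \<le> M lo N C G + N"
proof -
  have "A lo N C G \<le> (\<Sum>l\<in>levels lo N. W C l * 2 powr G + 1)"
    unfolding A_def of_int_sum by (rule sum_mono) (rule A_lev_bounds)
  also have "\<dots> = M lo N C G + N"
    by (simp add: M_def sum.distrib levels_def)
  finally show ?thesis .
qed

lemma M_less_of_A_less:
  assumes "A lo N C G < 2 ^ b"
  shows "M lo N C G < 2 ^ b"
proof -
  have "real_of_int (A lo N C G) < 2 ^ b"
    using assms by simp
  then show ?thesis
    using M_le_A[of lo N C G] by linarith
qed

lemma good_safe_of_M_bounds:
  assumes "2 ^ K \<le> M lo N C G" "M lo N C G + N < 2 ^ b"
  shows "2 ^ K \<le> A lo N C G \<and> A lo N C G < 2 ^ b"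
proof -
  have "(2::real) ^ K \<le> A lo N C G" "A lo N C G < (2::real) ^ b"
    using assms M_le_A[of lo N C G] A_le_M_add_N[of lo N C G] by linarith+
  then show ?thesis
    by simp
qed

lemma valid_config_significand:
  "valid_config b lo N C \<Longrightarrow> x \<in># C l \<Longrightarrow> 2 ^ (b - 1) \<le> x \<and> x < 2 ^ b"
  by (simp add: valid_config_def)

lemma M_single_level:
  assumes "lam \<in> levels lo N" "\<forall>l. l \<noteq> lam \<longrightarrow> C l = {#}"
  shows "M lo N C G = W C lam * 2 powr G"
  unfolding M_def using assms by (subst sum.remove) (auto simp: W_def SS_def levels_def)

lemma A_mono_submultiset:
  assumes "\<forall>l. C' l \<subseteq># C l"
  shows "A lo N C' G \<le> A lo N C G"
proof -
  have "A_lev C' G l \<le> A_lev C G l" for l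
  proof -
    have "SS C' l \<le> SS C l"
      using assms[rule_format, of l] by (auto simp: SS_def subset_mset.le_iff_add)
    then show ?thesis
      by (auto simp: A_lev_def W_def intro: floor_mono mult_right_mono)
  qed
  then show ?thesis
    unfolding A_def by (rule sum_mono)
qed

lemma single_significand_shift_good_safe:
  fixes b K L0 :: nat
  assumes valid: "valid_config b lo N C" and lam: "lam \<in> levels lo N"
    and single: "C lam = {#s#}" "\<forall>l. l \<noteq> lam \<longrightarrow> C l = {#}"
    and N_K: "real N < 2 ^ K" and "K \<le> L0" and "L0 + 2 \<le> b"
  defines "G \<equiv> int L0 + 1 - int b - lam"
  shows "2 ^ K \<le> A lo N C G \<and> A lo N C G < 2 ^ b"
proof (rule good_safe_of_M_bounds)
  have s: "2 ^ (b - 1) \<le> s" "s < 2 ^ b"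
    using valid_config_significand[OF valid, of s lam] single(1) by simp_all
  have "0 < b" using \<open>L0 + 2 \<le> b\<close> by simp
  have M_eq: "M lo N C G = real s * 2 ^ (L0 + 1) / 2 ^ b"
    using M_single_level[OF lam single(2)]
    by (simp add: W_mult_powr single SS_def G_def powr_diff powr_add powr_realpow)
  have "(2::real) ^ K \<le> 2 ^ L0"
    using \<open>K \<le> L0\<close> by simp
  also have "(2::real) ^ L0 = 2 ^ (b - 1) * 2 ^ (L0 + 1) / 2 ^ b"
    using \<open>0 < b\<close> by (simp add: power_add power_diff)
  also have "\<dots> \<le> M lo N C G"
    unfolding M_eq using s(1) by (intro divide_right_mono mult_right_mono) simp_all
  finally show "2 ^ K \<le> M lo N C G" .
  have "M lo N C G < 2 ^ (L0 + 1)"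
    unfolding M_eq using s(2) by (simp add: field_simps)
  moreover have "(2::real) ^ K \<le> 2 ^ (L0 + 1)"
    using \<open>K \<le> L0\<close> by (intro power_increasing) simp_all
  moreover have "(2::real) ^ (L0 + 1) + 2 ^ (L0 + 1) \<le> 2 ^ b"
    using \<open>L0 + 2 \<le> b\<close> power_increasing[of "L0 + 2" b "2::real"] by simp
  ultimately show "M lo N C G + N < 2 ^ b"
    using N_K by linarith
qed

lemma SS_add_significand:
  "SS (C(lv := add_mset s (C lv))) l = SS C l + (if l = lv then s else 0)"
  by (simp add: SS_def)

lemma M_add_significand:
  assumes "lv \<in> levels lo N"
  shows "M lo N (C(lv := C lv + {#s#})) G = M lo N C G + real s * 2 powr (lv + G)"
proof -
  have "W (C(lv := C lv + {#s#})) l * 2 powr G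
      = W C l * 2 powr G + (if l = lv then real s * 2 powr (lv + G) else 0)" for l
    by (simp add: W_mult_powr SS_add_significand distrib_right)
  then show ?thesis
    using assms by (simp add: M_def sum.distrib levels_def)
qed

lemma M_add_significand_le:
  assumes "lv \<in> levels lo N"
  shows "M lo N (C(lv := C lv + {#s#})) G
    \<le> M lo N C G + W (C(lv := C lv + {#s#})) lv * 2 powr G"
  unfolding M_add_significand[OF assms] by (simp add: W_mult_powr SS_add_significand)

lemma level_overflow_shift_good_safe:
  fixes b K R :: nat
  assumes lv: "lv \<in> levels lo N" and C': "C' = C(lv := C lv + {#s#})" and "0 < s"
    and safe: "A lo N C G < 2 ^ b" and overflow: "2 ^ b \<le> A_lev C' G lv"
    and N_K: "real N < 2 ^ K" and "K \<le> R" and "R + 3 \<le> b"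
  defines "Gd \<equiv> int R - \<lfloor>log 2 (real (SS C' lv))\<rfloor> - lv"
  shows "2 ^ K \<le> A lo N C' Gd \<and> A lo N C' Gd < 2 ^ b"
proof (rule good_safe_of_M_bounds)
  define S' where "S' = real (SS C' lv)"
  define e where "e = \<lfloor>log 2 S'\<rfloor>"
  have "0 < S'"
    using C' \<open>0 < s\<close> by (simp add: S'_def SS_add_significand)
  then have e: "2 powr e \<le> S'" "S' < 2 powr (e + 1)"
    using floor_log_eq_powr_iff[of S' 2 e] by (simp_all add: e_def)
  have mass_Gd: "W C' lv * 2 powr Gd = S' * 2 powr (real R - e)"
    by (simp add: W_mult_powr S'_def Gd_def e_def)
  have "(2::real) ^ R = 2 powr e * 2 powr (real R - e)"
    by (simp add: powr_realpow flip: powr_add)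
  also have "\<dots> \<le> W C' lv * 2 powr Gd"
    unfolding mass_Gd using e(1) by (intro mult_right_mono) simp_all
  finally have mass_Gd_ge: "2 ^ R \<le> W C' lv * 2 powr Gd" .
  have "W C' lv * 2 powr Gd < 2 powr (e + 1) * 2 powr (real R - e)"
    unfolding mass_Gd using e(2) by (intro mult_strict_right_mono) simp_all
  also have "\<dots> = 2 powr (1 + real R)"
    by (simp flip: powr_add)
  also have "\<dots> = 2 * 2 ^ R"
    by (simp add: powr_add powr_realpow)
  finally have mass_Gd_less: "W C' lv * 2 powr Gd < 2 * 2 ^ R" .
  have "Gd \<le> G - 2"
  proof -
    have "(2::real) powr (b - 1) = 2 ^ b / 2"
      using \<open>R + 3 \<le> b\<close> by (simp add: powr_diff powr_realpow)
    also have "\<dots> \<le> 2 ^ b - 1"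
      using \<open>R + 3 \<le> b\<close> power_increasing[of 1 b "2::real"] by simp
    also have "\<dots> \<le> W C' lv * 2 powr G"
    proof -
      have "(2::real) ^ b \<le> A_lev C' G lv"
        using overflow by simp
      then show ?thesis
        using A_lev_bounds(2)[of C' G lv] by linarith
    qed
    also have "\<dots> = S' * 2 powr (lv + G)"
      by (simp add: W_mult_powr S'_def)
    also have "\<dots> < 2 powr (e + 1) * 2 powr (lv + G)"
      using e(2) by (intro mult_strict_right_mono) simp_all
    also have "\<dots> = 2 powr (e + 1 + lv + G)"
      by (simp add: add.assoc flip: powr_add)
    finally have "real b - 1 < e + 1 + lv + G"
      by simp
    then show ?thesis
      using \<open>R + 3 \<le> b\<close> unfolding Gd_def e_def S'_def by linarith
  qed
  have "M lo N C Gd = 2 powr (Gd - G) * M lo N C G"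
    using M_shift[of lo N C G "Gd - G"] by simp
  also have "\<dots> \<le> 2 powr (-2) * M lo N C G"
    using \<open>Gd \<le> G - 2\<close> by (intro mult_right_mono) (simp_all add: M_nonneg)
  also have "\<dots> < 2 powr (-2) * 2 ^ b"
    using M_less_of_A_less[OF safe] by simp
  finally have M_C_Gd: "M lo N C Gd < 2 ^ b / 4"
    by (simp add: powr_minus divide_simps)
  show "2 ^ K \<le> M lo N C' Gd"
    using mass_Gd_ge level_mass_le_M[OF lv, of C' Gd] power_increasing[OF \<open>K \<le> R\<close>, of "2::real"]
    by linarith
  have "(2::real) ^ R * 8 \<le> 2 ^ b"
    using power_increasing[OF \<open>R + 3 \<le> b\<close>, of "2::real"] by (simp add: power_add)
  moreover have "real N < 2 ^ R"
    using N_K power_increasing[OF \<open>K \<le> R\<close>, of "2::real"] by linarith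
  moreover have "M lo N C' Gd \<le> M lo N C Gd + W C' lv * 2 powr Gd"
    unfolding C' by (rule M_add_significand_le[OF lv])
  ultimately show "M lo N C' Gd + N < 2 ^ b"
    using M_C_Gd mass_Gd_less by linarith
qed

lemma total_overflow_shift_good_safe:
  fixes b K R \<Delta> :: nat
  assumes lv: "lv \<in> levels lo N" and C': "C' = C(lv := C lv + {#s#})"
    and safe: "A lo N C G < 2 ^ b" and level_safe: "A_lev C' G lv < 2 ^ b"
    and overflow: "2 ^ b \<le> A lo N C' G"
    and N_K: "real N < 2 ^ K" and "K + \<Delta> \<le> R" and "R + 3 \<le> b" and "2 \<le> \<Delta>"
  shows "2 ^ K \<le> A lo N C' (G - \<Delta>) \<and> A lo N C' (G - \<Delta>) < 2 ^ b"
proof (rule good_safe_of_M_bounds)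
  have shift: "M lo N C' (G - \<Delta>) = M lo N C' G / 2 ^ \<Delta>"
    using M_shift[of lo N C' G "- int \<Delta>"] by (simp add: powr_minus powr_realpow divide_inverse)
  have pow_K: "(2::real) ^ K * 8 \<le> 2 ^ b"
    using power_increasing[of "K + 3" b "2::real"] \<open>K + \<Delta> \<le> R\<close> \<open>R + 3 \<le> b\<close>
    by (simp add: power_add)
  have pow_KD: "(2::real) ^ K * 2 ^ \<Delta> * 2 \<le> 2 ^ b"
    using power_increasing[of "K + \<Delta> + 1" b "2::real"] \<open>K + \<Delta> \<le> R\<close> \<open>R + 3 \<le> b\<close>
    by (simp add: power_add)
  have "(2::real) ^ b \<le> A lo N C' G"
    using overflow by simp
  then have "2 ^ b / 2 \<le> M lo N C' G"
    using A_le_M_add_N[of lo N C' G] N_K pow_K by linarith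
  then have "2 ^ b / 2 / 2 ^ \<Delta> \<le> M lo N C' (G - \<Delta>)"
    unfolding shift by (rule divide_right_mono) simp_all
  moreover have "2 ^ K \<le> (2::real) ^ b / 2 / 2 ^ \<Delta>"
    using pow_KD by (simp add: divide_simps)
  ultimately show "2 ^ K \<le> M lo N C' (G - \<Delta>)"
    by linarith
  have "M lo N C' G \<le> M lo N C G + W C' lv * 2 powr G"
    unfolding C' by (rule M_add_significand_le[OF lv])
  moreover have "real_of_int (A_lev C' G lv) < 2 ^ b"
    using level_safe by simp
  ultimately have "M lo N C' G < 2 * 2 ^ b"
    using M_less_of_A_less[OF safe] A_lev_bounds(1)[of C' lv G] by linarith
  moreover have "(4::real) \<le> 2 ^ \<Delta>"
    using power_increasing[OF \<open>2 \<le> \<Delta>\<close>, of "2::real"] by simp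
  ultimately have "M lo N C' (G - \<Delta>) \<le> M lo N C' G / 4"
    unfolding shift by (intro divide_left_mono) (simp_all add: M_nonneg)
  then show "M lo N C' (G - \<Delta>) + N < 2 ^ b"
    using \<open>M lo N C' G < 2 * 2 ^ b\<close> N_K pow_K by linarith
qed

lemma SS_ge_of_nonempty:
  assumes "valid_config b lo N C" "C l \<noteq> {#}"
  shows "2 ^ (b - 1) \<le> SS C l"
proof -
  obtain x where "x \<in># C l"
    using assms(2) by blast
  then obtain rest where "C l = add_mset x rest"
    by (metis multi_member_split)
  then have "x \<le> SS C l"
    by (simp add: SS_def)
  then show ?thesis
    using valid_config_significand[OF assms(1) \<open>x \<in># C l\<close>] by linarith
qed

lemma sum_SS_less:
  assumes "valid_config b lo N C"
  shows "(\<Sum>l\<in>levels lo N. real (SS C l)) < 2 ^ b * 2 ^ b"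
proof -
  have "SS C l \<le> size (C l) * 2 ^ b" for l
  proof -
    have "SS C l \<le> sum_mset (image_mset (\<lambda>_. 2 ^ b) (C l))"
      unfolding SS_def using sum_mset_mono[of "C l" id "\<lambda>_. 2 ^ b"]
        valid_config_significand[OF assms] by (simp add: less_imp_le)
    then show ?thesis
      by simp
  qed
  then have "(\<Sum>l\<in>levels lo N. SS C l) \<le> zcount lo N C * 2 ^ b"
    unfolding zcount_def sum_distrib_right by (rule sum_mono)
  also have "\<dots> < 2 ^ b * 2 ^ b"
    using assms by (simp add: valid_config_def)
  finally have "real (\<Sum>l\<in>levels lo N. SS C l) < real (2 ^ b * 2 ^ b)"
    by (simp only: of_nat_less_iff)
  then show ?thesis
    by simp
qed

lemma top_level:
  assumes "valid_config b lo N C" "1 \<le> zcount lo N C"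
  defines "lam \<equiv> Max {l. C l \<noteq> {#}}"
  shows "lam \<in> levels lo N" "C lam \<noteq> {#}" "\<forall>l>lam. C l = {#}"
proof -
  have sub: "{l. C l \<noteq> {#}} \<subseteq> levels lo N"
    using assms(1) by (auto simp: valid_config_def)
  then have fin: "finite {l. C l \<noteq> {#}}"
    by (rule finite_subset) (simp add: levels_def)
  have "(\<Sum>l\<in>levels lo N. size (C l)) \<noteq> 0"
    using assms(2) by (simp add: zcount_def)
  then have "\<exists>l\<in>levels lo N. size (C l) \<noteq> 0"
    by (meson sum.neutral)
  then have "{l. C l \<noteq> {#}} \<noteq> {}"
    by auto
  then have "lam \<in> {l. C l \<noteq> {#}}"
    unfolding lam_def using fin by (intro Max_in)
  then show "lam \<in> levels lo N" "C lam \<noteq> {#}"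
    using sub by auto
  show "\<forall>l>lam. C l = {#}"
    using Max_ge[OF fin] unfolding lam_def by (meson leD mem_Collect_eq)
qed

lemma sum_nat_reindex_down:
  "(\<Sum>r=0..n. g (a - int r)) = (\<Sum>l\<in>{a - int n..a}. g l)"
proof (rule sum.reindex_bij_witness[where i = "\<lambda>l. nat (a - l)" and j = "\<lambda>r. a - int r"])
  fix l assume "l \<in> {a - int n..a}"
  then show "a - int (nat (a - l)) = l" "nat (a - l) \<in> {0..n}"
    by auto
qed auto

lemma M_top_window_bounds:
  assumes valid: "valid_config b lo N C" and above: "\<forall>l>lam. C l = {#}"
  defines "T \<equiv> \<Sum>r=0..b. real (SS C (lam - int r)) / 2 ^ r"
  shows "T \<le> M lo N C (- lam)" "M lo N C (- lam) < T + 2 ^ b / 2"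
proof -
  define f where "f l = real (SS C l) * 2 powr (l - lam)" for l
  define I where "I = {lam - int b..lam}"
  have f_nonneg: "0 \<le> f l" for l
    by (simp add: f_def)
  have "T = (\<Sum>r=0..b. f (lam - int r))"
    unfolding T_def f_def by (intro sum.cong) (simp_all add: powr_minus_divide powr_realpow)
  also have "\<dots> = (\<Sum>l\<in>I. f l)"
    unfolding I_def by (rule sum_nat_reindex_down)
  also have "\<dots> = (\<Sum>l\<in>levels lo N \<inter> I. f l)"
    using valid by (intro sum.mono_neutral_right) (auto simp: I_def f_def SS_def valid_config_def)
  finally have T_eq: "T = (\<Sum>l\<in>levels lo N \<inter> I. f l)" .
  have M_eq: "M lo N C (- lam) = T + (\<Sum>l\<in>levels lo N - I. f l)"
    unfolding T_eq by (simp add: M_def W_mult_powr f_def sum.Int_Diff levels_def)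
  have "f l \<le> real (SS C l) / 2 ^ (b + 1)" if "l \<notin> I" for l
  proof (cases "lam < l")
    case True
    then show ?thesis
      using above by (simp add: f_def SS_def)
  next
    case False
    then have "2 powr (l - lam) \<le> 2 powr (- real (b + 1))"
      using that by (simp add: I_def)
    also have "\<dots> = 1 / 2 ^ (b + 1)"
      by (subst powr_minus_divide, subst powr_realpow) simp_all
    finally show ?thesis
      unfolding f_def using mult_left_mono[of _ _ "real (SS C l)"] by fastforce
  qed
  then have "(\<Sum>l\<in>levels lo N - I. f l) \<le> (\<Sum>l\<in>levels lo N. real (SS C l) / 2 ^ (b + 1))"
    by (intro order.trans[OF sum_mono sum_mono2]) (simp_all add: levels_def)
  also have "\<dots> < 2 ^ b * 2 ^ b / 2 ^ (b + 1)"
    unfolding sum_divide_distrib[symmetric] using sum_SS_less[OF valid]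
    by (intro divide_strict_right_mono) simp_all
  also have "\<dots> = 2 ^ b / 2"
    by simp
  finally have "(\<Sum>l\<in>levels lo N - I. f l) < 2 ^ b / 2" .
  moreover have "0 \<le> (\<Sum>l\<in>levels lo N - I. f l)"
    by (simp add: f_nonneg sum_nonneg)
  ultimately show "T \<le> M lo N C (- lam)" "M lo N C (- lam) < T + 2 ^ b / 2"
    unfolding M_eq by simp_all
qed

lemma sum_inverse_powers_of_two: "(\<Sum>r=0..n. 1 / (2::real) ^ r) = 2 - 1 / 2 ^ n"
  by (induction n) (simp_all add: field_simps)

lemma scaled_floor_bounds:
  fixes q b r :: nat
  defines "F \<equiv> \<lfloor>real (q div 2 ^ b) * 2 powr (1 - real r)\<rfloor>"
  shows "2 ^ b / 2 * F \<le> real q / 2 ^ r"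
    and "real q / 2 ^ r \<le> 2 ^ b / 2 * (real_of_int F + 1) + 2 ^ b / 2 ^ r"
proof -
  define h where "h = real (q div 2 ^ b)"
  have scaled: "h * 2 powr (1 - real r) = 2 * h / 2 ^ r"
    by (simp add: powr_diff powr_realpow)
  have "q div 2 ^ b * 2 ^ b \<le> q"
    by (rule div_times_less_eq_dividend)
  then have "real (q div 2 ^ b * 2 ^ b) \<le> real q"
    by (simp only: of_nat_le_iff)
  then have q_ge: "h * 2 ^ b \<le> real q"
    by (simp add: h_def)
  have "q mod 2 ^ b < 2 ^ b"
    by simp
  then have "q < q div 2 ^ b * 2 ^ b + 2 ^ b"
    using div_mult_mod_eq[of q "2 ^ b"] by linarith
  then have "real q \<le> real (q div 2 ^ b * 2 ^ b + 2 ^ b)"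
    by (simp only: of_nat_le_iff less_imp_le)
  then have q_less: "real q \<le> h * 2 ^ b + 2 ^ b"
    by (simp add: h_def)
  have F: "F \<le> 2 * h / 2 ^ r" "2 * h / 2 ^ r \<le> F + 1"
    unfolding F_def h_def[symmetric] scaled by linarith+
  have "2 ^ b / 2 * F \<le> 2 ^ b / 2 * (2 * h / 2 ^ r)"
    using F(1) by (intro mult_left_mono) simp_all
  also have "\<dots> = h * 2 ^ b / 2 ^ r"
    by simp
  also have "\<dots> \<le> real q / 2 ^ r"
    using q_ge by (intro divide_right_mono) simp_all
  finally show "2 ^ b / 2 * F \<le> real q / 2 ^ r" .
  have "real q / 2 ^ r \<le> (h * 2 ^ b + 2 ^ b) / 2 ^ r"
    using q_less by (intro divide_right_mono) simp_all
  also have "\<dots> = 2 ^ b / 2 * (2 * h / 2 ^ r) + 2 ^ b / 2 ^ r"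
    by (simp add: add_divide_distrib)
  also have "\<dots> \<le> 2 ^ b / 2 * (real_of_int F + 1) + 2 ^ b / 2 ^ r"
    using F(2) by (intro add_right_mono mult_left_mono) simp_all
  finally show "real q / 2 ^ r \<le> 2 ^ b / 2 * (real_of_int F + 1) + 2 ^ b / 2 ^ r" .
qed

lemma floor_sum_bounds:
  fixes f :: "nat \<Rightarrow> nat" and b :: nat
  defines "E \<equiv> \<Sum>r=0..b. \<lfloor>real (f r div 2 ^ b) * 2 powr (1 - real r)\<rfloor>"
  shows "2 ^ b / 2 * real_of_int E \<le> (\<Sum>r=0..b. real (f r) / 2 ^ r)"
    and "(\<Sum>r=0..b. real (f r) / 2 ^ r) < 2 ^ b / 2 * (real_of_int E + real b + 5)"
proof -
  show "2 ^ b / 2 * real_of_int E \<le> (\<Sum>r=0..b. real (f r) / 2 ^ r)"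
    unfolding E_def of_int_sum sum_distrib_left by (intro sum_mono scaled_floor_bounds(1))
  have geometric: "(\<Sum>r=0..b. (2::real) ^ b / 2 ^ r) = 2 ^ b * (2 - 1 / 2 ^ b)"
    unfolding sum_inverse_powers_of_two[symmetric] sum_distrib_left by simp
  have "(\<Sum>r=0..b. real (f r) / 2 ^ r)
      \<le> (\<Sum>r=0..b. 2 ^ b / 2 * (real_of_int \<lfloor>real (f r div 2 ^ b) * 2 powr (1 - real r)\<rfloor> + 1) + 2 ^ b / 2 ^ r)"
    by (intro sum_mono scaled_floor_bounds(2))
  also have "\<dots> = 2 ^ b / 2 * (real_of_int E + real b + 1) + 2 ^ b * (2 - 1 / 2 ^ b)"
    unfolding sum.distrib geometric sum_distrib_left[symmetric]
    by (simp add: E_def of_int_sum sum.distrib)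
  also have "\<dots> = 2 ^ b / 2 * (real_of_int E + real b + 5) - 1"
    by (simp add: field_simps)
  also have "\<dots> < 2 ^ b / 2 * (real_of_int E + real b + 5)"
    by simp
  finally show "(\<Sum>r=0..b. real (f r) / 2 ^ r) < 2 ^ b / 2 * (real_of_int E + real b + 5)" .
qed

lemma shift_up_scaling_bounds:
  fixes E :: int and S :: real and b L :: nat
  assumes "2 ^ b / 2 * real_of_int E \<le> S" "2 ^ b / 2 \<le> S"
    and "S < 2 ^ b / 2 * (real_of_int E + real b + 6)"
  defines "t \<equiv> \<lfloor>log 2 (real_of_int (max E 1))\<rfloor>"
  shows "2 ^ L \<le> 2 powr (int L + 1 - int b - t) * S"
    and "2 powr (int L + 1 - int b - t) * S < 2 ^ L * (real b + 8)"
proof -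
  define c where "c = 2 powr (int L + 1 - int b - t)"
  have c_scale: "c * (2 ^ b / 2) = 2 powr (real L - t)"
    by (simp add: c_def powr_diff powr_add powr_realpow)
  have t: "2 powr t \<le> max E 1" "max E 1 < 2 powr (t + 1)"
    using floor_log_eq_powr_iff[of "real_of_int (max E 1)" 2 t] by (simp_all add: t_def)
  have "2 ^ b / 2 * 2 powr t \<le> 2 ^ b / 2 * real_of_int (max E 1)"
    using t(1) by (intro mult_left_mono) simp_all
  also have "\<dots> \<le> S"
    using assms(1,2) by (cases "E \<le> 1") (simp_all add: max_def)
  finally have "c * (2 ^ b / 2 * 2 powr t) \<le> c * S"
    by (simp add: c_def)
  moreover have "c * (2 ^ b / 2 * 2 powr t) = 2 powr (real L - t) * 2 powr t"
    by (simp only: mult.assoc[symmetric] c_scale)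
  moreover have "\<dots> = 2 ^ L"
    by (simp add: powr_realpow flip: powr_add)
  ultimately show "2 ^ L \<le> c * S"
    by simp
  have "0 \<le> t"
    by (simp add: t_def)
  then have "2 powr (real L - t) \<le> 2 ^ L"
    by (simp add: powr_realpow[symmetric])
  have "2 powr (real L - t) * real_of_int E \<le> 2 powr (real L - t) * max E 1"
    by (intro mult_left_mono) simp_all
  also have "\<dots> < 2 powr (real L - t) * 2 powr (t + 1)"
    using t(2) by (intro mult_strict_left_mono) simp_all
  also have "\<dots> = 2 powr (real L + 1)"
    by (simp flip: powr_add)
  also have "\<dots> = 2 * 2 ^ L"
    by (simp add: powr_add powr_realpow)
  finally have "2 powr (real L - t) * real_of_int E < 2 * 2 ^ L" .
  have "c * S < c * (2 ^ b / 2 * (real_of_int E + real b + 6))"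
    using assms(3) by (simp add: c_def)
  also have "\<dots> = 2 powr (real L - t) * (real_of_int E + (real b + 6))"
    by (simp only: mult.assoc[symmetric] c_scale add.assoc)
  also have "\<dots> = 2 powr (real L - t) * real_of_int E + 2 powr (real L - t) * (real b + 6)"
    by (rule distrib_left)
  also have "\<dots> \<le> 2 * 2 ^ L + 2 ^ L * (real b + 6)"
    using \<open>2 powr (real L - t) * real_of_int E < 2 * 2 ^ L\<close> \<open>2 powr (real L - t) \<le> 2 ^ L\<close>
    by (intro add_mono mult_right_mono) simp_all
  finally show "c * S < 2 ^ L * (real b + 8)"
    by (simp add: algebra_simps)
qed

lemma shift_up_good_safe:
  fixes b L :: nat
  assumes valid: "valid_config b lo N C" and nonempty: "1 \<le> zcount lo N C"
    and N_L: "real N < 2 ^ L" and L_b: "2 ^ L * (real b + 10) < 2 ^ b"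
  defines "lam \<equiv> Max {l. C l \<noteq> {#}}"
  defines "E \<equiv> \<Sum>r=0..b. \<lfloor>real (SS C (lam - int r) div 2 ^ b) * 2 powr (1 - real r)\<rfloor>"
  defines "t \<equiv> \<lfloor>log 2 (real_of_int (max E 1))\<rfloor>"
  shows "2 ^ L \<le> A lo N C (int L + 1 - int b - t - lam) \<and> A lo N C (int L + 1 - int b - t - lam) < 2 ^ b"
proof (rule good_safe_of_M_bounds)
  have lam: "lam \<in> levels lo N" "C lam \<noteq> {#}" and above: "\<forall>l>lam. C l = {#}"
    unfolding lam_def by (rule top_level[OF valid nonempty])+
  define S where "S = M lo N C (- lam)"
  have M_eq: "M lo N C (int L + 1 - int b - t - lam) = 2 powr (int L + 1 - int b - t) * S"
    using M_shift[of lo N C "- lam" "int L + 1 - int b - t"] by (simp add: S_def)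
  note window = M_top_window_bounds[OF valid above, folded S_def]
  note floors = floor_sum_bounds[where f = "\<lambda>r. SS C (lam - int r)" and b = b, folded E_def]
  have "2 ^ b / 2 \<le> real (2 ^ (b - 1))"
    by (cases b) simp_all
  also have "\<dots> \<le> W C lam * 2 powr (- lam)"
    using SS_ge_of_nonempty[OF valid lam(2)] by (simp add: W_mult_powr)
  also have "\<dots> \<le> S"
    unfolding S_def by (rule level_mass_le_M[OF lam(1)])
  finally have S_ge: "2 ^ b / 2 \<le> S" .
  have S_ge_E: "2 ^ b / 2 * real_of_int E \<le> S"
    using floors(1) window(1) by linarith
  have S_less: "S < 2 ^ b / 2 * (real_of_int E + real b + 6)"
  proof -
    have "2 ^ b / 2 * (real_of_int E + real b + 6) = 2 ^ b / 2 * (real_of_int E + real b + 5) + 2 ^ b / 2"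
      by (simp add: algebra_simps)
    then show ?thesis
      using floors(2) window(2) by linarith
  qed
  note bounds = shift_up_scaling_bounds[OF S_ge_E S_ge S_less, of L, folded t_def]
  show "2 ^ L \<le> M lo N C (int L + 1 - int b - t - lam)"
    unfolding M_eq by (rule bounds(1))
  show "M lo N C (int L + 1 - int b - t - lam) + N < 2 ^ b"
  proof -
    have "2 ^ L * (real b + 10) = 2 ^ L * (real b + 8) + 2 * 2 ^ L"
      by (simp add: algebra_simps)
    then show ?thesis
      unfolding M_eq using bounds(2) N_L L_b by linarith
  qed
qed

lemma pow2_mult_less_of_log_less:
  fixes b L :: nat
  assumes "real L < real b - log 2 x" "0 < x"
  shows "2 ^ L * x < 2 ^ b"
proof -
  have "log 2 x < real b - real L"
    using assms(1) by simp
  then have "x < 2 powr (real b - real L)"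
    using assms(2) by (simp add: log_less_iff)
  then show ?thesis
    by (simp add: powr_diff powr_realpow field_simps)
qed

lemma parameter_bounds:
  fixes b N K L :: nat
  assumes "0 < N" "log 2 (real N) < real K" "K \<le> L" "real L < real b - log 2 (real b + 10)"
  shows "real N < 2 ^ K" "real N < 2 ^ L" "2 ^ L * (real b + 10) < 2 ^ b" "L + 3 < b"
proof -
  show N_K: "real N < 2 ^ K"
    using assms(1,2) by (simp add: log_less_iff powr_realpow)
  have "(2::real) ^ K \<le> 2 ^ L"
    using assms(3) by (intro power_increasing) simp_all
  then show "real N < 2 ^ L"
    using N_K by linarith
  show L_b: "2 ^ L * (real b + 10) < 2 ^ b"
    using assms(4) by (rule pow2_mult_less_of_log_less) simp
  have "(2::real) ^ (L + 3) = 2 ^ L * 8"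
    by (simp add: power_add)
  also have "\<dots> \<le> 2 ^ L * (real b + 10)"
    by (intro mult_left_mono) simp_all
  also have "\<dots> < 2 ^ b"
    by (rule L_b)
  finally show "L + 3 < b"
    by simp
qed

theorem mainTheorem10:
  fixes b N K \<Delta> R L0 L :: nat and lo :: int
  assumes pos: "b > 0" "N > 0" "K > 0" "\<Delta> > 0" "R > 0" "L0 > 0" "L > 0"
    and hD1: "2 \<le> \<Delta>"
    and hD2: "int \<Delta> \<le> int R - int K"
    and hD3: "int R - int K < int b - int K - 2"
    and hK1: "log 2 (real N) < real K"
    and hK2: "K \<le> L0" and hK3: "L0 \<le> L"
    and hL: "real L < real b - log 2 (real b + 10)"
  shows
   "(\<forall>C lam s. valid_config b lo N C \<and> lam \<in> levels lo N \<and> C lam = {#s#} \<and>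
        (\<forall>l. l \<noteq> lam \<longrightarrow> C l = {#}) \<longrightarrow>
        (let G = int L0 + 1 - int b - lam in 2^K \<le> A lo N C G \<and> A lo N C G < 2^b))
  \<and> (\<forall>C C' lv s G. valid_config b lo N C \<and> lv \<in> levels lo N \<and>
        2^(b-1) \<le> s \<and> s < 2^b \<and> C' = C(lv := C lv + {#s#}) \<and>
        valid_config b lo N C' \<and> A lo N C G < 2^b \<longrightarrow>
        (A_lev C' G lv \<ge> 2^b \<longrightarrow>
           (let Gd = int R - \<lfloor>log 2 (real (SS C' lv))\<rfloor> - lv in
              2^K \<le> A lo N C' Gd \<and> A lo N C' Gd < 2^b)) \<and>
        (A_lev C' G lv < 2^b \<and> A lo N C' G \<ge> 2^b \<longrightarrow>
           (let Gd = G - int \<Delta> in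
              2^K \<le> A lo N C' Gd \<and> A lo N C' Gd < 2^b)))
  \<and> (\<forall>C C'. valid_config b lo N C \<and> (\<forall>l. C' l \<subseteq># C l) \<longrightarrow>
        (\<forall>G. A lo N C' G \<le> A lo N C G \<and> (A lo N C G < 2^b \<longrightarrow> A lo N C' G < 2^b)))
  \<and> (\<forall>C. valid_config b lo N C \<and> zcount lo N C \<ge> 1 \<longrightarrow>
        (let lam = Max {l. C l \<noteq> {#}};
             H = (\<lambda>r::nat. SS C (lam - int r) div 2^b);
             E = (\<Sum>r=0..b. \<lfloor>real (H r) * 2 powr (1 - real r)\<rfloor>);
             t = \<lfloor>log 2 (real_of_int (max E 1))\<rfloor>;
             Gu = int L + 1 - int b - t - lam
         in 2^L \<le> A lo N C Gu \<and> A lo N C Gu < 2^b))"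
proof -
  note params = parameter_bounds[OF pos(2) hK1 order.trans[OF hK2 hK3] hL]
  have L0_b: "L0 + 2 \<le> b"
    using params(4) hK3 by simp
  have K_R: "K + \<Delta> \<le> R" and R_b: "R + 3 \<le> b"
    using hD2 hD3 by simp_all
  have significand_pos: "0 < s" if "2 ^ (b - 1) \<le> s" for s :: nat
    using that by (rule less_le_trans[rotated]) simp
  show ?thesis
    unfolding Let_def
    apply (intro conjI; intro allI impI; elim conjE)
    subgoal
      by (rule single_significand_shift_good_safe[OF _ _ _ _ params(1) hK2 L0_b])
    subgoal
      using level_overflow_shift_good_safe[OF _ _ significand_pos _ _ params(1) _ R_b]
        total_overflow_shift_good_safe[OF _ _ _ _ _ params(1) K_R R_b hD1] K_R
      by simp
    subgoal for C C' G
      using A_mono_submultiset[of C' C lo N G] by simp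
    subgoal
      by (rule shift_up_good_safe[OF _ _ params(2,3)])
    done
qed

end
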